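(* Let $q$ be a prime power, $n\ge 6$ even, and $\mathcal{L}$ the Desarguesian $2$-spread of $\mathbb{F}_q^n$. Every $4$-dimensional subspace $U$ of $\mathbb{F}_q^n$ that contains exactly one element of $\mathcal{L}$ is adjacent in the Grassmann graph $J_q(n,4)$ to exactly $q+1$ four-dimensional subspaces containing $q^2+1$ elements of $\mathcal{L}$.
   Context: Identify $\mathbb{F}_q^n$ with $\mathbb{F}_{q^n}$, $n$ even, and let $F'=\mathbb{F}_{q^2}$ be its subfield of order $q^2$. The Desarguesian $2$-spread $\mathcal{L}$ is the set of $2$-dimensional $\mathbb{F}_q$-subspaces $F'x=\{\lambda x:\lambda\in F'\}$, $x\ne0$. The Grassmann graph $J_q(n,k)$ has as vertices the $k$-dimensional subspaces of $\mathbb{F}_q^n$, adjacent iff they meet in a $(k-1)$-dimensional subspace. *)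

theory Defs
  imports "HOL-Computational_Algebra.Primes"
begin

text \<open>We identify F_q^n with the finite field 'a of order q^n.  The prime subfield
  F_q is the set of roots of x^q - x, and F_{q^2} the set of roots of x^(q^2) - x.\<close>

definition Fq :: "nat \<Rightarrow> 'a::{finite,field} set" where
  "Fq q = {x. x ^ q = x}"

definition Fq2 :: "nat \<Rightarrow> 'a::{finite,field} set" where
  "Fq2 q = {x. x ^ (q^2) = x}"

definition fq_span :: "nat \<Rightarrow> 'a::{finite,field} list \<Rightarrow> 'a set" where
  "fq_span q vs = {(\<Sum>i<length vs. c i * vs ! i) | c. \<forall>i<length vs. c i \<in> Fq q}"

definition fq_indep :: "nat \<Rightarrow> 'a::{finite,field} list \<Rightarrow> bool" where
  "fq_indep q vs \<longleftrightarrow> (\<forall>c. (\<forall>i<length vs. c i \<in> Fq q) \<longrightarrow>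
      (\<Sum>i<length vs. c i * vs ! i) = 0 \<longrightarrow> (\<forall>i<length vs. c i = 0))"

definition fq_subspace_dim :: "nat \<Rightarrow> 'a::{finite,field} set \<Rightarrow> nat \<Rightarrow> bool" where
  "fq_subspace_dim q U k \<longleftrightarrow>
     (\<exists>vs. length vs = k \<and> fq_indep q vs \<and> fq_span q vs = U)"

definition desarg_spread :: "nat \<Rightarrow> 'a::{finite,field} set set" where
  "desarg_spread q = {{l * x | l. l \<in> Fq2 q} | x. x \<noteq> 0}"

definition grassmann_adj :: "nat \<Rightarrow> nat \<Rightarrow> 'a::{finite,field} set \<Rightarrow> 'a set \<Rightarrow> bool" where
  "grassmann_adj q k U W \<longleftrightarrow> fq_subspace_dim q U k \<and> fq_subspace_dim q W k \<and>
     fq_subspace_dim q (U \<inter> W) (k - 1)"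

definition spread_count :: "nat \<Rightarrow> 'a::{finite,field} set \<Rightarrow> nat" where
  "spread_count q U = card {S \<in> desarg_spread q. S \<subseteq> U}"

end

theory Submission
  imports Defs "HOL-Computational_Algebra.Polynomial" "HOL-Library.FuncSet" "HOL-Library.Set_Algebras"
begin

(* Let S be the unique spread element inside U. A 4-space W containing two spread elements is
   their sum, hence an F_{q^2}-subspace; so the 4-spaces W with q^2+1 spread elements are exactly
   the F_{q^2}-subspaces of F_q-dimension 4. If such a W is adjacent to U, then U \<inter> W is a
   3-space containing S, since a 3-space meeting S trivially would span 5 dimensions together
   with S inside U. Conversely, a 3-space T with S \<subseteq> T \<subseteq> U determines
   W = S + F_{q^2} y for any y \<in> T - S, and U \<inter> W = T because U = W would put q^2+1 spread
   elements into U. Hence W \<mapsto> U \<inter> W is a bijection onto the 3-spaces between S and U,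
   of which there are q+1. *)

section \<open>Subfields of a finite field\<close>

(* The library's finite_field_power_card_eq_same needs the class finite_field, which a type
   variable of sort {finite,field} does not belong to. *)
lemma power_card_UNIV_eq_self:
  fixes x :: "'a::{finite,field}"
  shows "x ^ card (UNIV :: 'a set) = x"
proof (cases "x = 0")
  case False
  define N where "N = UNIV - {0 :: 'a}"
  have "bij_betw ((*) x) N N"
    by (rule bij_betw_byWitness[of _ "(*) (inverse x)"]) (use False in \<open>auto simp: N_def\<close>)
  hence "(\<Prod>y\<in>N. x * y) = (\<Prod>y\<in>N. y)"
    using prod.reindex_bij_betw[of "(*) x" N N id] by simp
  moreover have "(\<Prod>y\<in>N. x * y) = x ^ card N * (\<Prod>y\<in>N. y)"
    by (simp add: prod.distrib)
  moreover have "(\<Prod>y\<in>N. y) \<noteq> 0"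
    by (simp add: N_def)
  ultimately have "x ^ card N = 1"
    by simp
  moreover have "card (UNIV :: 'a set) = Suc (card N)"
    using card_Suc_Diff1[of UNIV "0 :: 'a"] by (simp add: N_def)
  ultimately show ?thesis
    by simp
qed (simp add: zero_power finite_UNIV_card_ge_0)

lemma of_nat_card_UNIV_eq_0: "of_nat (card (UNIV :: 'a::{finite,ring_1} set)) = (0 :: 'a)"
proof -
  have "(\<Sum>y\<in>UNIV. y + 1) = (\<Sum>y\<in>(UNIV :: 'a set). y)"
    by (rule sum.reindex_bij_witness[of _ "\<lambda>y. y - 1" "\<lambda>y. y + 1"]) auto
  thus ?thesis
    by (simp add: sum.distrib)
qed

lemma prime_CHAR_finite_field: "prime CHAR('a::{finite,field})"
  by (intro prime_CHAR_semidom finite_imp_CHAR_pos) simp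

lemma CHAR_eq_if_card_UNIV:
  assumes "card (UNIV :: 'a::{finite,field} set) = p ^ k" "prime p" "k > 0"
  shows "CHAR('a) = p"
proof -
  have "CHAR('a) dvd p ^ k"
    by (metis assms(1) of_nat_card_UNIV_eq_0 of_nat_eq_0_iff_char_dvd)
  thus ?thesis
    using prime_CHAR_finite_field[where 'a = 'a] assms(2) prime_dvd_power primes_dvd_imp_eq by blast
qed

lemma freshmans_dream_diff:
  assumes "prime CHAR('a::comm_ring_1)" "m = CHAR('a) ^ n"
  shows "(x - y :: 'a) ^ m = x ^ m - y ^ m"
  using freshmans_dream'[OF assms, of "x - y" y] by (simp add: algebra_simps)

lemma card_roots_le_leading_exponent:
  fixes c :: "nat \<Rightarrow> 'a::idom"
  assumes "finite E" "d \<in> E" "c d \<noteq> 0" "\<forall>e\<in>E. e \<le> d"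
  shows "card {x. (\<Sum>e\<in>E. c e * x ^ e) = 0} \<le> d"
proof -
  define P where "P = (\<Sum>e\<in>E. monom (c e) e)"
  have coeff_P: "coeff P k = (if k \<in> E then c k else 0)" for k
    using assms(1) by (simp add: P_def coeff_sum coeff_monom)
  have "P \<noteq> 0"
    using coeff_P[of d] assms(2,3) by auto
  moreover have "degree P \<le> d"
    using assms(4) by (intro degree_le) (auto simp: coeff_P not_le)
  moreover have "poly P x = (\<Sum>e\<in>E. c e * x ^ e)" for x
    by (simp add: P_def poly_sum poly_monom)
  ultimately show ?thesis
    using card_poly_roots_bound[of P] by simp
qed

lemma card_UNIV_eq_card_range_mult_card_kernel:
  fixes f :: "'a::{finite,ab_group_add} \<Rightarrow> 'b::ab_group_add"
  assumes "additive f"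
  shows "card (UNIV :: 'a set) = card (range f) * card {x. f x = 0}"
proof -
  have fibre: "card (f -` {c}) = card {x. f x = 0}" if "c \<in> range f" for c
  proof -
    obtain x0 where "f x0 = c"
      using \<open>c \<in> range f\<close> by blast
    hence "bij_betw ((+) x0) {x. f x = 0} (f -` {c})"
      by (intro bij_betw_byWitness[of _ "\<lambda>x. x - x0"])
        (auto simp: additive.add[OF assms] additive.diff[OF assms])
    thus ?thesis
      by (metis bij_betw_same_card)
  qed
  have "(\<Union>c\<in>range f. f -` {c}) = UNIV"
    by blast
  moreover have "card (\<Union>c\<in>range f. f -` {c}) = (\<Sum>c\<in>range f. card (f -` {c}))"
    by (rule card_UN_disjoint) auto
  ultimately have "card (UNIV :: 'a set) = (\<Sum>c\<in>range f. card (f -` {c}))"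
    by metis
  also have "\<dots> = card (range f) * card {x. f x = 0}"
    using fibre by simp
  finally show ?thesis .
qed

lemma CHAR_power_ge_2:
  assumes "j > 0"
  shows "CHAR('a::{finite,field}) ^ j \<ge> 2"
proof -
  have "2 \<le> CHAR('a)"
    using prime_CHAR_finite_field by (rule prime_ge_2_nat)
  also have "\<dots> \<le> CHAR('a) ^ j"
    using assms \<open>2 \<le> CHAR('a)\<close> by (simp add: self_le_power)
  finally show ?thesis .
qed

lemma card_fixed_points_power_le:
  assumes "Q \<ge> 2"
  shows "card {x::'a::idom. x ^ Q = x} \<le> Q"
proof -
  have "card {x::'a. (\<Sum>e\<in>{1, Q}. (if e = Q then 1 else - 1) * x ^ e) = 0} \<le> Q"
    using assms by (intro card_roots_le_leading_exponent) auto
  moreover have "(\<Sum>e\<in>{1, Q}. (if e = Q then 1 else - 1) * x ^ e) = x ^ Q - x" for x :: 'a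
    using assms by simp
  ultimately show ?thesis
    by simp
qed

(* The image of x \<mapsto> x^Q - x consists of roots of the trace y \<mapsto> \<Sum>i<m. y^(Q^i),
   since on it the sum telescopes to x^(Q^m) - x = 0. *)
lemma card_range_power_minus_self_le:
  assumes card: "card (UNIV :: 'a::{finite,field} set) = Q ^ m"
    and Q: "Q = CHAR('a) ^ j" and "j > 0" "m > 0"
  shows "card (range (\<lambda>x::'a. x ^ Q - x)) \<le> Q ^ (m - 1)"
proof -
  note prime = prime_CHAR_finite_field[where 'a = 'a]
  have "Q \<ge> 2"
    using CHAR_power_ge_2[OF \<open>j > 0\<close>] Q by simp
  have trace_zero: "(\<Sum>i<m. (x ^ Q - x) ^ (Q ^ i)) = 0" for x :: 'a
  proof -
    have "(x ^ Q - x) ^ (Q ^ i) = x ^ (Q ^ Suc i) - x ^ (Q ^ i)" for i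
      by (subst freshmans_dream_diff[OF prime, where n = "j * i"])
        (simp_all add: Q power_mult flip: power_mult)
    hence "(\<Sum>i<m. (x ^ Q - x) ^ (Q ^ i)) = (\<Sum>i<m. x ^ (Q ^ Suc i) - x ^ (Q ^ i))"
      by (simp only:)
    also have "\<dots> = x ^ (Q ^ m) - x"
      by (subst sum_lessThan_telescope) simp
    finally show ?thesis
      using power_card_UNIV_eq_self[of x] card by simp
  qed
  have inj_exp: "inj_on (\<lambda>i. Q ^ i) {..<m}"
    using \<open>Q \<ge> 2\<close> by (auto intro: inj_onI simp: power_inject_exp)
  have "range (\<lambda>x::'a. x ^ Q - x) \<subseteq> {y. (\<Sum>e\<in>(\<lambda>i. Q ^ i) ` {..<m}. 1 * y ^ e) = 0}"
    using trace_zero by (auto simp: sum.reindex[OF inj_exp])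
  hence "card (range (\<lambda>x::'a. x ^ Q - x))
      \<le> card {y::'a. (\<Sum>e\<in>(\<lambda>i. Q ^ i) ` {..<m}. 1 * y ^ e) = 0}"
    by (intro card_mono) auto
  also have "\<dots> \<le> Q ^ (m - 1)"
    using \<open>m > 0\<close> \<open>Q \<ge> 2\<close> by (intro card_roots_le_leading_exponent) (auto intro: power_increasing)
  finally show ?thesis .
qed

lemma card_fixed_points_power_CHAR:
  assumes card: "card (UNIV :: 'a::{finite,field} set) = Q ^ m"
    and Q: "Q = CHAR('a) ^ j" and "j > 0" "m > 0"
  shows "card {x::'a. x ^ Q = x} = Q"
proof -
  note prime = prime_CHAR_finite_field[where 'a = 'a]
  have "Q \<ge> 2"
    using CHAR_power_ge_2[OF \<open>j > 0\<close>] Q by simp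
  define F where "F = {x::'a. x ^ Q = x}"
  have "additive (\<lambda>x::'a. x ^ Q - x)"
    by (rule additive.intro) (simp add: freshmans_dream'[OF prime Q])
  hence "card (UNIV :: 'a set) = card (range (\<lambda>x::'a. x ^ Q - x)) * card F"
    using card_UNIV_eq_card_range_mult_card_kernel[of "\<lambda>x::'a. x ^ Q - x"] by (simp add: F_def)
  moreover have "Q ^ m = Q * Q ^ (m - 1)"
    using \<open>m > 0\<close> by (cases m) auto
  ultimately have "Q * Q ^ (m - 1) = card (range (\<lambda>x::'a. x ^ Q - x)) * card F"
    using card by simp
  also have "\<dots> \<le> Q ^ (m - 1) * card F"
    using card_range_power_minus_self_le[OF assms] by (rule mult_right_mono) simp
  finally have "Q \<le> card F"
    using \<open>Q \<ge> 2\<close> by (simp add: mult.commute)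
  with card_fixed_points_power_le[where 'a = 'a, OF \<open>Q \<ge> 2\<close>] show ?thesis
    by (simp add: F_def)
qed

definition subfield :: "'a::field set \<Rightarrow> bool" where
  "subfield K \<longleftrightarrow> 1 \<in> K \<and> (\<forall>x\<in>K. \<forall>y\<in>K. x - y \<in> K \<and> x * y \<in> K) \<and> (\<forall>x\<in>K. inverse x \<in> K)"

lemma
  assumes "subfield K"
  shows subfield_one: "1 \<in> K"
    and subfield_zero: "0 \<in> K"
    and subfield_diff: "x \<in> K \<Longrightarrow> y \<in> K \<Longrightarrow> x - y \<in> K"
    and subfield_uminus: "x \<in> K \<Longrightarrow> - x \<in> K"
    and subfield_add: "x \<in> K \<Longrightarrow> y \<in> K \<Longrightarrow> x + y \<in> K"
    and subfield_mult: "x \<in> K \<Longrightarrow> y \<in> K \<Longrightarrow> x * y \<in> K"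
    and subfield_inverse: "x \<in> K \<Longrightarrow> inverse x \<in> K"
proof -
  show one: "1 \<in> K" and diff: "x \<in> K \<Longrightarrow> y \<in> K \<Longrightarrow> x - y \<in> K"
    and "x \<in> K \<Longrightarrow> y \<in> K \<Longrightarrow> x * y \<in> K" "x \<in> K \<Longrightarrow> inverse x \<in> K" for x y
    using assms by (auto simp: subfield_def)
  show zero: "0 \<in> K"
    using diff[OF one one] by simp
  show uminus: "- x \<in> K" if "x \<in> K" for x
    using diff[OF zero that] by simp
  show "x \<in> K \<Longrightarrow> y \<in> K \<Longrightarrow> x + y \<in> K" for x y
    using diff[OF _ uminus, of x y] by simp
qed

lemma subfield_Frobenius_fixed_points:
  assumes "prime CHAR('a::field)"
  shows "subfield {x::'a. x ^ (CHAR('a) ^ j) = x}"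
  unfolding subfield_def
  by (simp add: freshmans_dream_diff[OF assms] power_mult_distrib power_inverse)

lemma card_subfield_ge_2: "subfield (K :: 'a::field set) \<Longrightarrow> finite K \<Longrightarrow> card K \<ge> 2"
  using card_mono[of K "{0, 1}"] by (auto simp: subfield_zero subfield_one)

definition subspace_over :: "'a::field set \<Rightarrow> 'a set \<Rightarrow> bool" where
  "subspace_over K V \<longleftrightarrow> 0 \<in> V \<and> (\<forall>x\<in>V. \<forall>y\<in>V. x + y \<in> V) \<and> (\<forall>c\<in>K. \<forall>x\<in>V. c * x \<in> V)"

lemma
  assumes "subspace_over K V"
  shows subspace_over_zero: "0 \<in> V"
    and subspace_over_add: "x \<in> V \<Longrightarrow> y \<in> V \<Longrightarrow> x + y \<in> V"
    and subspace_over_scale: "c \<in> K \<Longrightarrow> x \<in> V \<Longrightarrow> c * x \<in> V"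
  using assms by (auto simp: subspace_over_def)

lemma subspace_over_diff:
  assumes "subfield K" "subspace_over K V" "x \<in> V" "y \<in> V"
  shows "x - y \<in> V"
proof -
  have "- 1 \<in> K"
    using subfield_uminus[OF assms(1) subfield_one[OF assms(1)]] .
  hence "x + (- 1) * y \<in> V"
    using subspace_over_add[OF assms(2,3) subspace_over_scale[OF assms(2) _ assms(4)]] by blast
  thus ?thesis
    by simp
qed

lemma subspace_over_sum:
  "subspace_over K V \<Longrightarrow> (\<And>i. i \<in> A \<Longrightarrow> g i \<in> V) \<Longrightarrow> sum g A \<in> V"
  by (induction A rule: infinite_finite_induct) (auto simp: subspace_over_def)

lemma subspace_over_Int: "subspace_over K V \<Longrightarrow> subspace_over K W \<Longrightarrow> subspace_over K (V \<inter> W)"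
  by (simp add: subspace_over_def)

lemma subspace_over_subset_scalars:
  "K' \<subseteq> K \<Longrightarrow> subspace_over K V \<Longrightarrow> subspace_over K' V"
  by (auto simp: subspace_over_def)

lemma subspace_over_set_plus:
  assumes "subspace_over K A" "subspace_over K B"
  shows "subspace_over K (A + B)"
  unfolding subspace_over_def
proof (intro conjI ballI)
  show "0 \<in> A + B"
    using set_plus_intro[OF subspace_over_zero[OF assms(1)] subspace_over_zero[OF assms(2)]] by simp
next
  fix x y assume "x \<in> A + B" "y \<in> A + B"
  then obtain a b a' b' where "x = a + b" "y = a' + b'" "a \<in> A" "b \<in> B" "a' \<in> A" "b' \<in> B"
    by (auto elim!: set_plus_elim)
  thus "x + y \<in> A + B"
    using set_plus_intro[of "a + a'" A "b + b'" B] assms by (simp add: subspace_over_add add_ac)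
next
  fix c x assume "c \<in> K" "x \<in> A + B"
  then obtain a b where "x = a + b" "a \<in> A" "b \<in> B"
    by (auto elim!: set_plus_elim)
  thus "c * x \<in> A + B"
    using set_plus_intro[of "c * a" A "c * b" B] assms \<open>c \<in> K\<close>
    by (simp add: subspace_over_scale distrib_left)
qed

lemma set_plus_subset_subspace_over:
  "subspace_over K V \<Longrightarrow> A \<subseteq> V \<Longrightarrow> B \<subseteq> V \<Longrightarrow> A + B \<subseteq> V"
  by (auto elim!: set_plus_elim simp: subspace_over_def)

lemma subspace_over_elt_times:
  assumes "subfield M"
  shows "subspace_over M (y *o M)"
  unfolding subspace_over_def
proof (intro conjI ballI)
  show "0 \<in> y *o M"
    using set_times_intro2[OF subfield_zero[OF assms], of y] by simp
next
  fix u v assume "u \<in> y *o M" "v \<in> y *o M"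
  then obtain a b where "a \<in> M" "b \<in> M" "u = y * a" "v = y * b"
    by (auto simp: elt_set_times_def)
  thus "u + v \<in> y *o M"
    using set_times_intro2[OF subfield_add[OF assms], of a b y] by (simp add: distrib_left)
next
  fix c u assume "c \<in> M" "u \<in> y *o M"
  then obtain a where "a \<in> M" "u = y * a"
    by (auto simp: elt_set_times_def)
  thus "c * u \<in> y *o M"
    using set_times_intro2[OF subfield_mult[OF assms \<open>c \<in> M\<close>], of a y] by (simp add: mult.left_commute)
qed

lemma elt_times_subset_subspace_over:
  "subspace_over M V \<Longrightarrow> y \<in> V \<Longrightarrow> y *o M \<subseteq> V"
  by (auto simp: elt_set_times_def subspace_over_scale mult.commute)

lemma mem_elt_times_self: "subfield M \<Longrightarrow> y \<in> y *o M"
  using set_times_intro2[OF subfield_one] by fastforce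

lemma card_elt_times:
  assumes "y \<noteq> (0 :: 'a::field)"
  shows "card (y *o M) = card M"
proof -
  have "y *o M = (*) y ` M"
    by (auto simp: elt_set_times_def)
  thus ?thesis
    using assms by (simp add: card_image inj_on_def)
qed

lemma card_set_plus_subspaces:
  fixes A B :: "'a::{finite,field} set"
  assumes "subfield K" "subspace_over K A" "subspace_over K B" "A \<inter> B \<subseteq> {0}"
  shows "card (A + B) = card A * card B"
proof -
  have "A + B = (\<lambda>(a, b). a + b) ` (A \<times> B)"
    by (auto simp: set_plus_def)
  moreover have "inj_on (\<lambda>(a, b). a + b) (A \<times> B)"
  proof (rule inj_onI, clarify)
    fix a b a' b' assume "a \<in> A" "b \<in> B" "a' \<in> A" "b' \<in> B" and sum: "a + b = a' + b'"
    moreover have "a - a' = b' - b"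
      using sum by (simp add: algebra_simps)
    ultimately have "a - a' \<in> A" "a - a' \<in> B"
      using subspace_over_diff[OF assms(1)] assms(2,3) by metis+
    hence "a = a'"
      using assms(4) by auto
    thus "a = a' \<and> b = b'"
      using sum by simp
  qed
  ultimately show ?thesis
    by (simp add: card_image card_cartesian_product)
qed

lemma Int_elt_times_subset_zero:
  assumes "subfield M" "subspace_over M S" "y \<notin> S"
  shows "S \<inter> y *o M \<subseteq> {0}"
proof
  fix z assume "z \<in> S \<inter> y *o M"
  then obtain c where c: "c \<in> M" "z = y * c" "z \<in> S"
    by (auto simp: elt_set_times_def)
  have "c = 0"
  proof (rule ccontr)
    assume "c \<noteq> 0"
    hence "y = inverse c * z"
      using c(2) by simp
    thus False
      using subspace_over_scale[OF assms(2) subfield_inverse[OF assms(1) c(1)] c(3)] assms(3) by simp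
  qed
  thus "z \<in> {0}"
    using c(2) by simp
qed

lemma card_set_plus_elt_times:
  fixes S :: "'a::{finite,field} set"
  assumes "subfield M" "subspace_over M S" "y \<notin> S"
  shows "card (S + y *o M) = card S * card M"
proof -
  have "y \<noteq> 0"
    using assms(3) subspace_over_zero[OF assms(2)] by blast
  thus ?thesis
    using card_set_plus_subspaces[OF assms(1,2) subspace_over_elt_times[OF assms(1)]
        Int_elt_times_subset_zero[OF assms]] card_elt_times[OF \<open>y \<noteq> 0\<close>] by simp
qed

section \<open>Bases and dimension\<close>

definition span_over :: "'a::field set \<Rightarrow> 'a list \<Rightarrow> 'a set" where
  "span_over K vs = {(\<Sum>i<length vs. c i * vs ! i) | c. \<forall>i<length vs. c i \<in> K}"

definition indep_over :: "'a::field set \<Rightarrow> 'a list \<Rightarrow> bool" where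
  "indep_over K vs \<longleftrightarrow> (\<forall>c. (\<forall>i<length vs. c i \<in> K) \<longrightarrow>
      (\<Sum>i<length vs. c i * vs ! i) = 0 \<longrightarrow> (\<forall>i<length vs. c i = 0))"

lemma indep_overD:
  assumes "indep_over K vs" "\<forall>i<length vs. c i \<in> K" "(\<Sum>i<length vs. c i * vs ! i) = 0"
    "i < length vs"
  shows "c i = 0"
  using assms unfolding indep_over_def by blast

lemma subspace_over_span_over:
  assumes "subfield K"
  shows "subspace_over K (span_over K vs)"
  unfolding subspace_over_def
proof (intro conjI ballI)
  show "0 \<in> span_over K vs"
    using subfield_zero[OF assms] by (auto simp: span_over_def intro!: exI[of _ "\<lambda>_. 0"])
next
  fix x y assume "x \<in> span_over K vs" "y \<in> span_over K vs"
  then obtain c d where "x = (\<Sum>i<length vs. c i * vs ! i)" "\<forall>i<length vs. c i \<in> K"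
    and "y = (\<Sum>i<length vs. d i * vs ! i)" "\<forall>i<length vs. d i \<in> K"
    by (auto simp: span_over_def)
  thus "x + y \<in> span_over K vs"
    using subfield_add[OF assms] unfolding span_over_def
    by (auto simp: sum.distrib distrib_right intro!: exI[of _ "\<lambda>i. c i + d i"])
next
  fix a x assume "a \<in> K" "x \<in> span_over K vs"
  then obtain c where "x = (\<Sum>i<length vs. c i * vs ! i)" "\<forall>i<length vs. c i \<in> K"
    by (auto simp: span_over_def)
  thus "a * x \<in> span_over K vs"
    using subfield_mult[OF assms \<open>a \<in> K\<close>] unfolding span_over_def
    by (auto simp: sum_distrib_left mult.assoc intro!: exI[of _ "\<lambda>i. a * c i"])
qed

lemma span_over_subset:
  assumes "subspace_over K V" "set vs \<subseteq> V"
  shows "span_over K vs \<subseteq> V"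
proof
  fix x assume "x \<in> span_over K vs"
  then obtain c where "x = (\<Sum>i<length vs. c i * vs ! i)" "\<forall>i<length vs. c i \<in> K"
    by (auto simp: span_over_def)
  moreover have "vs ! i \<in> V" if "i < length vs" for i
    using assms(2) that by auto
  ultimately show "x \<in> V"
    by (auto intro!: subspace_over_sum[OF assms(1)] subspace_over_scale[OF assms(1)])
qed

lemma card_span_over:
  assumes "subfield K" "indep_over K vs"
  shows "card (span_over K vs) = card K ^ length vs"
proof -
  define lin where "lin c = (\<Sum>i<length vs. c i * vs ! i)" for c
  define Coef where "Coef = PiE {..<length vs} (\<lambda>_. K)"
  have "span_over K vs = lin ` Coef"
  proof (intro equalityI subsetI)
    fix x assume "x \<in> span_over K vs"
    then obtain c where "x = lin c" "\<forall>i<length vs. c i \<in> K"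
      by (auto simp: span_over_def lin_def)
    moreover have "lin c = lin (restrict c {..<length vs})"
      by (simp add: lin_def)
    ultimately show "x \<in> lin ` Coef"
      by (auto simp: Coef_def)
  next
    fix x assume "x \<in> lin ` Coef"
    then obtain c where "x = lin c" "\<forall>i<length vs. c i \<in> K"
      by (auto simp: Coef_def)
    thus "x \<in> span_over K vs"
      unfolding span_over_def lin_def by blast
  qed
  moreover have "inj_on lin Coef"
  proof (rule inj_onI)
    fix c d assume "c \<in> Coef" "d \<in> Coef" "lin c = lin d"
    have "(\<Sum>i<length vs. (c i - d i) * vs ! i) = lin c - lin d"
      by (simp add: lin_def left_diff_distrib sum_subtractf)
    hence zero: "(\<Sum>i<length vs. (c i - d i) * vs ! i) = 0"
      using \<open>lin c = lin d\<close> by simp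
    have "c i \<in> K" "d i \<in> K" if "i < length vs" for i
      using PiE_mem[OF \<open>c \<in> Coef\<close>[unfolded Coef_def]]
        PiE_mem[OF \<open>d \<in> Coef\<close>[unfolded Coef_def]] that
      by simp_all
    hence "\<forall>i<length vs. c i - d i \<in> K"
      using subfield_diff[OF assms(1)] by blast
    hence "c i - d i = 0" if "i < length vs" for i
      using indep_overD[OF assms(2) _ zero that] by blast
    thus "c = d"
      using \<open>c \<in> Coef\<close> \<open>d \<in> Coef\<close>
      by (intro PiE_ext[of _ "{..<length vs}" "\<lambda>_. K"]) (auto simp: Coef_def)
  qed
  ultimately have "card (span_over K vs) = card Coef"
    by (simp add: card_image)
  also have "\<dots> = card K ^ length vs"
    unfolding Coef_def by (subst card_PiE) auto
  finally show ?thesis .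
qed

lemma indep_over_snoc:
  assumes "subfield K" "indep_over K vs" "v \<notin> span_over K vs"
  shows "indep_over K (vs @ [v])"
  unfolding indep_over_def
proof (rule allI, intro impI)
  fix c assume cK: "\<forall>i<length (vs @ [v]). c i \<in> K"
    and zero: "(\<Sum>i<length (vs @ [v]). c i * (vs @ [v]) ! i) = 0"
  define n where "n = length vs"
  define w where "w = (\<Sum>i<n. c i * vs ! i)"
  have "(\<Sum>i<length (vs @ [v]). c i * (vs @ [v]) ! i) = (\<Sum>i<n. c i * (vs @ [v]) ! i) + c n * v"
    by (simp add: n_def)
  also have "(\<Sum>i<n. c i * (vs @ [v]) ! i) = w"
    unfolding w_def by (intro sum.cong) (simp_all add: n_def nth_append)
  finally have sum_eq: "w + c n * v = 0"
    using zero by simp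
  have c_K: "c i \<in> K" if "i \<le> n" for i
    using cK that by (simp add: n_def)
  have "c n = 0"
  proof (rule ccontr)
    assume "c n \<noteq> 0"
    have "c n * v = - w"
      using sum_eq by (simp add: eq_neg_iff_add_eq_0 add.commute)
    hence "v = - w / c n"
      using \<open>c n \<noteq> 0\<close> by (metis nonzero_mult_div_cancel_left)
    also have "\<dots> = (\<Sum>i<n. (- c i / c n) * vs ! i)"
      unfolding w_def by (simp only: sum_negf[symmetric] sum_divide_distrib) (simp add: divide_inverse mult_ac)
    finally have "v = (\<Sum>i<n. (- c i / c n) * vs ! i)" .
    moreover have "- c i / c n \<in> K" if "i < n" for i
      using c_K[of i] c_K[of n] that assms(1)
      by (simp add: divide_inverse subfield_mult subfield_uminus subfield_inverse)
    ultimately have "v \<in> span_over K vs"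
      unfolding span_over_def n_def by (intro CollectI exI[of _ "\<lambda>i. - c i / c n"]) (simp add: n_def)
    thus False
      using assms(3) by simp
  qed
  hence "w = 0"
    using sum_eq by simp
  hence "c i = 0" if "i < n" for i
    using indep_overD[OF assms(2), of c i] c_K that by (simp add: w_def n_def)
  with \<open>c n = 0\<close> show "\<forall>i<length (vs @ [v]). c i = 0"
    by (simp add: n_def less_Suc_eq)
qed

lemma ex_basis_over:
  fixes V :: "'a::{finite,field} set"
  assumes "subfield K" "subspace_over K V"
  shows "\<exists>vs. indep_over K vs \<and> span_over K vs = V"
proof -
  define indep_in_V
    where "indep_in_V m \<longleftrightarrow> (\<exists>vs. length vs = m \<and> indep_over K vs \<and> set vs \<subseteq> V)" for m
  have "indep_in_V 0"
    by (auto simp: indep_in_V_def indep_over_def)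
  moreover have "m \<le> card (UNIV :: 'a set)" if "indep_in_V m" for m
  proof -
    obtain vs where "length vs = m" "indep_over K vs"
      using \<open>indep_in_V m\<close> by (auto simp: indep_in_V_def)
    have "m < 2 ^ m"
      by (rule less_exp)
    also have "\<dots> \<le> card K ^ m"
      using card_subfield_ge_2[OF assms(1)] by (simp add: power_mono)
    also have "\<dots> = card (span_over K vs)"
      using card_span_over[OF assms(1) \<open>indep_over K vs\<close>] \<open>length vs = m\<close> by simp
    also have "\<dots> \<le> card (UNIV :: 'a set)"
      by (simp add: card_mono)
    finally show ?thesis
      by simp
  qed
  ultimately obtain M where "indep_in_V M" and max: "\<And>m. indep_in_V m \<Longrightarrow> m \<le> M"
    using Nat.ex_has_greatest_nat[of indep_in_V 0 "card (UNIV :: 'a set)"] by blast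
  then obtain vs where vs: "length vs = M" "indep_over K vs" "set vs \<subseteq> V"
    by (auto simp: indep_in_V_def)
  have "V \<subseteq> span_over K vs"
  proof
    fix v assume "v \<in> V"
    show "v \<in> span_over K vs"
    proof (rule ccontr)
      assume "v \<notin> span_over K vs"
      hence "indep_in_V (Suc M)"
        using vs \<open>v \<in> V\<close> indep_over_snoc[OF assms(1) vs(2)] unfolding indep_in_V_def
        by (intro exI[of _ "vs @ [v]"]) simp
      thus False
        using max[of "Suc M"] by simp
    qed
  qed
  thus ?thesis
    using span_over_subset[OF assms(2) vs(3)] vs(2) by blast
qed

lemma basis_over_iff_card:
  fixes V :: "'a::{finite,field} set"
  assumes "subfield K"
  shows "(\<exists>vs. length vs = d \<and> indep_over K vs \<and> span_over K vs = V) \<longleftrightarrow>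
    subspace_over K V \<and> card V = card K ^ d"
proof
  assume "\<exists>vs. length vs = d \<and> indep_over K vs \<and> span_over K vs = V"
  then obtain vs where "length vs = d" "indep_over K vs" "span_over K vs = V"
    by blast
  thus "subspace_over K V \<and> card V = card K ^ d"
    using subspace_over_span_over[OF assms, of vs] card_span_over[OF assms, of vs] by simp
next
  assume V: "subspace_over K V \<and> card V = card K ^ d"
  obtain vs where vs: "indep_over K vs" "span_over K vs = V"
    using ex_basis_over[OF assms conjunct1[OF V]] by blast
  have "card K ^ length vs = card K ^ d"
    using card_span_over[OF assms vs(1)] vs(2) V by simp
  hence "length vs = d"
    using card_subfield_ge_2[OF assms] by (simp add: power_inject_exp)
  thus "\<exists>vs. length vs = d \<and> indep_over K vs \<and> span_over K vs = V"
    using vs by blast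
qed

section \<open>Subspaces between two subspaces of codimension two\<close>

lemma set_plus_elt_times_subset:
  assumes "subspace_over M T" "S \<subseteq> T" "y \<in> T"
  shows "S + y *o M \<subseteq> T"
  using set_plus_subset_subspace_over[OF assms(1,2) elt_times_subset_subspace_over[OF assms(1,3)]] .

lemma mem_set_plus_elt_times:
  assumes "subfield M" "0 \<in> S"
  shows "y \<in> S + y *o M"
  using set_plus_intro[OF assms(2) mem_elt_times_self[OF assms(1)]] by simp

lemma subset_set_plus_elt_times:
  assumes "subfield M"
  shows "S \<subseteq> S + y *o M"
  using set_plus_intro[OF _ set_times_intro2[OF subfield_zero[OF assms]], of _ S y] by auto

lemma subspace_eq_set_plus_elt_times:
  fixes T :: "'a::{finite,field} set"
  assumes "subfield M" "subspace_over M S" "subspace_over M T" "S \<subseteq> T" "card T = card S * card M"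
    and "y \<in> T" "y \<notin> S"
  shows "T = S + y *o M"
  using card_subset_eq[OF finite set_plus_elt_times_subset[OF assms(3,4,6)]]
    card_set_plus_elt_times[OF assms(1,2,7)] assms(5) by simp

lemma power_add_2_diff_power_eq:
  fixes q :: nat
  shows "q ^ (k + 2) - q ^ k = (q + 1) * (q ^ (k + 1) - q ^ k)"
proof -
  have "int (q ^ (k + 2) - q ^ k) = int ((q + 1) * (q ^ (k + 1) - q ^ k))"
    by (cases "q = 0") (simp_all add: of_nat_diff power_increasing algebra_simps)
  thus ?thesis
    by (simp only: of_nat_eq_iff)
qed

(* Every such T equals S + K y for each y \<in> T - S, so the sets T - S partition U - S. *)
lemma card_intermediate_subspaces:
  fixes U :: "'a::{finite,field} set"
  assumes K: "subfield K" "card K = q"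
    and S: "subspace_over K S" "card S = q ^ k"
    and U: "subspace_over K U" "card U = q ^ (k + 2)" "S \<subseteq> U"
  shows "card {T. subspace_over K T \<and> S \<subseteq> T \<and> T \<subseteq> U \<and> card T = q ^ (k + 1)} = q + 1"
proof -
  define H where "H = {T. subspace_over K T \<and> S \<subseteq> T \<and> T \<subseteq> U \<and> card T = q ^ (k + 1)}"
  have "q \<ge> 2"
    using card_subfield_ge_2[OF K(1)] K(2) by simp
  have H_eq: "T = S + y *o K" if "T \<in> H" "y \<in> T" "y \<notin> S" for T y
    using that S K by (intro subspace_eq_set_plus_elt_times[OF K(1) S(1)]) (auto simp: H_def)
  have H_mem: "S + y *o K \<in> H" if "y \<in> U" "y \<notin> S" for y
    using that S U K subspace_over_set_plus[OF S(1) subspace_over_elt_times[OF K(1)]]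
      set_plus_elt_times_subset[OF U(1,3)] card_set_plus_elt_times[OF K(1) S(1)]
      subset_set_plus_elt_times[OF K(1)]
    by (auto simp: H_def)
  have "U - S = (\<Union>T\<in>H. T - S)"
  proof (intro equalityI subsetI)
    fix y assume "y \<in> U - S"
    thus "y \<in> (\<Union>T\<in>H. T - S)"
      using H_mem mem_set_plus_elt_times[OF K(1) subspace_over_zero[OF S(1)]] by blast
  qed (auto simp: H_def)
  moreover have "card (\<Union>T\<in>H. T - S) = (\<Sum>T\<in>H. card (T - S))"
    using H_eq by (intro card_UN_disjoint) (simp, simp, blast)
  ultimately have "card (U - S) = (\<Sum>T\<in>H. card (T - S))"
    by simp
  also have "\<dots> = card H * (q ^ (k + 1) - q ^ k)"
    using S(2) by (simp add: H_def card_Diff_subset)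
  finally have "(q + 1) * (q ^ (k + 1) - q ^ k) = card H * (q ^ (k + 1) - q ^ k)"
    using U(2,3) S(2) by (simp only: power_add_2_diff_power_eq[symmetric] card_Diff_subset[OF finite U(3)])
  moreover have "q ^ (k + 1) - q ^ k \<noteq> 0"
    using \<open>q \<ge> 2\<close> power_strict_increasing[of k "k + 1" q] by simp
  ultimately have "card H = q + 1"
    by (metis mult_cancel2)
  thus ?thesis
    unfolding H_def .
qed

section \<open>Spreads\<close>

lemma elt_times_mult_unit:
  assumes "subfield L" "l \<in> L" "l \<noteq> 0"
  shows "(x * l) *o L = x *o L"
proof (intro equalityI subsetI)
  fix y assume "y \<in> (x * l) *o L"
  then obtain m where "m \<in> L" "y = x * (l * m)"
    by (auto simp: elt_set_times_def mult.assoc)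
  thus "y \<in> x *o L"
    using subfield_mult[OF assms(1,2)] by (auto simp: elt_set_times_def)
next
  fix y assume "y \<in> x *o L"
  then obtain m where "m \<in> L" "y = (x * l) * (inverse l * m)"
    using assms(3) by (auto simp: elt_set_times_def mult.assoc)
  thus "y \<in> (x * l) *o L"
    using subfield_mult[OF assms(1) subfield_inverse[OF assms(1,2)]] by (auto simp: elt_set_times_def)
qed

definition spread_over :: "'a::field set \<Rightarrow> 'a set set" where
  "spread_over L = {x *o L | x. x \<noteq> 0}"

lemma spread_over_eq_elt_times:
  assumes "subfield L" "S \<in> spread_over L" "z \<in> S" "z \<noteq> 0"
  shows "S = z *o L"
proof -
  obtain x l where "S = x *o L" "l \<in> L" "z = x * l"
    using assms(2,3) by (auto simp: spread_over_def elt_set_times_def)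
  moreover have "l \<noteq> 0"
    using \<open>z = x * l\<close> assms(4) by auto
  ultimately show ?thesis
    using elt_times_mult_unit[OF assms(1)] by simp
qed

lemma spread_over_Int_subset_zero:
  assumes "subfield L" "S \<in> spread_over L" "S' \<in> spread_over L" "S \<noteq> S'"
  shows "S \<inter> S' \<subseteq> {0}"
  using spread_over_eq_elt_times[OF assms(1,2)] spread_over_eq_elt_times[OF assms(1,3)] assms(4) by blast

lemma subspace_over_spread_over:
  "subfield L \<Longrightarrow> S \<in> spread_over L \<Longrightarrow> subspace_over L S"
  by (auto simp: spread_over_def subspace_over_elt_times)

lemma card_spread_over:
  "S \<in> spread_over L \<Longrightarrow> card S = card L"
  by (auto simp: spread_over_def card_elt_times)

lemma elt_times_mem_spread_over: "x \<noteq> 0 \<Longrightarrow> x *o L \<in> spread_over L"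
  by (auto simp: spread_over_def)

(* The sets S - {0}, for spread elements S \<subseteq> W, partition W - {0}. *)
lemma card_spread_over_in_subspace:
  fixes W :: "'a::{finite,field} set"
  assumes "subfield L" "subspace_over L W"
  shows "(card L - 1) * card {S \<in> spread_over L. S \<subseteq> W} = card W - 1"
proof -
  define C where "C = {S \<in> spread_over L. S \<subseteq> W}"
  have "(\<Union>S\<in>C. S - {0}) = W - {0}"
  proof (intro equalityI subsetI)
    fix w assume "w \<in> W - {0}"
    hence "w *o L \<in> C" "w \<in> w *o L"
      using elt_times_mem_spread_over elt_times_subset_subspace_over[OF assms(2)] mem_elt_times_self[OF assms(1)]
      by (auto simp: C_def)
    thus "w \<in> (\<Union>S\<in>C. S - {0})"
      using \<open>w \<in> W - {0}\<close> by blast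
  qed (auto simp: C_def)
  moreover have "card (\<Union>S\<in>C. S - {0}) = (\<Sum>S\<in>C. card (S - {0}))"
    using spread_over_Int_subset_zero[OF assms(1)]
    by (intro card_UN_disjoint) (simp, simp, auto simp: C_def)
  moreover have "card (S - {0}) = card L - 1" if "S \<in> C" for S
    using that subspace_over_zero[OF subspace_over_spread_over[OF assms(1)]] card_spread_over[of S L]
    by (simp add: C_def)
  ultimately have "card (W - {0}) = card C * (card L - 1)"
    by simp
  thus ?thesis
    using subspace_over_zero[OF assms(2)] by (simp add: C_def mult.commute)
qed

locale quadratic_subfield =
  fixes K L :: "'a::{finite,field} set" and q :: nat
  assumes subfield_K: "subfield K" and subfield_L: "subfield L" and K_subset_L: "K \<subseteq> L"
    and card_K: "card K = q" and card_L: "card L = q\<^sup>2"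
begin

lemma q_ge_2: "q \<ge> 2"
  using card_subfield_ge_2[OF subfield_K] card_K by simp

lemma subspace_over_K_if_L: "subspace_over L W \<Longrightarrow> subspace_over K W"
  by (rule subspace_over_subset_scalars[OF K_subset_L])

lemma card_spread_over_in_L_subspace:
  assumes "subspace_over L W" "card W = q ^ 4"
  shows "card {S \<in> spread_over L. S \<subseteq> W} = q\<^sup>2 + 1"
proof -
  have "(q\<^sup>2 - 1) * card {S \<in> spread_over L. S \<subseteq> W} = q ^ 4 - 1"
    using card_spread_over_in_subspace[OF subfield_L assms(1)] assms(2) card_L by simp
  also have "\<dots> = (q\<^sup>2 - 1) * (q\<^sup>2 + 1)"
    by (simp add: algebra_simps power2_eq_square power4_eq_xxxx diff_mult_distrib)
  finally have "(q\<^sup>2 - 1) * card {S \<in> spread_over L. S \<subseteq> W} = (q\<^sup>2 - 1) * (q\<^sup>2 + 1)" .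
  moreover have "q\<^sup>2 - 1 \<noteq> 0"
    using q_ge_2 power_strict_increasing[of 0 2 q] by simp
  ultimately show ?thesis
    by (metis mult_cancel1)
qed

lemma subspace_over_L_if_two_spread_elements:
  assumes "subspace_over K W" "card W = q ^ 4" "card {S \<in> spread_over L. S \<subseteq> W} \<ge> 2"
  shows "subspace_over L W"
proof -
  obtain S1 S2 where S: "S1 \<in> spread_over L" "S2 \<in> spread_over L" "S1 \<subseteq> W" "S2 \<subseteq> W" "S1 \<noteq> S2"
    using assms(3) card_le_Suc0_iff_eq[of "{S \<in> spread_over L. S \<subseteq> W}"] by fastforce
  have L_sub: "subspace_over L S1" "subspace_over L S2"
    using S(1,2) subspace_over_spread_over[OF subfield_L] by blast+
  have "card (S1 + S2) = q ^ 4"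
    using card_set_plus_subspaces[OF subfield_L L_sub spread_over_Int_subset_zero[OF subfield_L S(1,2,5)]]
      card_spread_over[OF S(1)] card_spread_over[OF S(2)] card_L
    by (simp flip: power_add)
  moreover have "S1 + S2 \<subseteq> W"
    by (rule set_plus_subset_subspace_over[OF assms(1) S(3,4)])
  ultimately have "S1 + S2 = W"
    using assms(2) by (intro card_subset_eq) auto
  thus ?thesis
    using subspace_over_set_plus[OF L_sub] by simp
qed

end

locale unique_spread_element = quadratic_subfield +
  fixes U S :: "'a::{finite,field} set"
  assumes subspace_U: "subspace_over K U" and card_U: "card U = q ^ 4"
    and spread_in_U: "{S' \<in> spread_over L. S' \<subseteq> U} = {S}"
begin

lemma S_in_spread: "S \<in> spread_over L" and S_subset_U: "S \<subseteq> U"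
  using spread_in_U by auto

lemma subspace_over_L_S: "subspace_over L S"
  by (rule subspace_over_spread_over[OF subfield_L S_in_spread])

lemma card_S: "card S = q\<^sup>2"
  using card_spread_over[OF S_in_spread] card_L by simp

lemma subspace_over_L_S_plus_line: "subspace_over L (S + y *o L)"
  using subspace_over_set_plus[OF subspace_over_L_S subspace_over_elt_times[OF subfield_L]] .

lemma card_S_plus_line: "y \<notin> S \<Longrightarrow> card (S + y *o L) = q ^ 4"
  using card_set_plus_elt_times[OF subfield_L subspace_over_L_S] card_S card_L
  by (simp flip: power_add)

lemma spread_element_subset_neighbour:
  assumes "subspace_over L W" "subspace_over K (U \<inter> W)" "card (U \<inter> W) = q ^ 3"
  shows "S \<subseteq> W"
proof -
  have "\<not> (U \<inter> W) \<inter> S \<subseteq> {0}"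
  proof
    assume "(U \<inter> W) \<inter> S \<subseteq> {0}"
    hence "card ((U \<inter> W) + S) = q ^ 3 * q\<^sup>2"
      using card_set_plus_subspaces[OF subfield_K assms(2) subspace_over_K_if_L[OF subspace_over_L_S]]
        assms(3) card_S by simp
    moreover have "(U \<inter> W) + S \<subseteq> U"
      using set_plus_subset_subspace_over[OF subspace_U _ S_subset_U] by blast
    hence "card ((U \<inter> W) + S) \<le> q ^ 4"
      using card_mono[of U] card_U by simp
    ultimately show False
      using q_ge_2 power_strict_increasing[of 4 5 q] by (simp flip: power_add)
  qed
  then obtain z where "z \<in> W" "z \<in> S" "z \<noteq> 0"
    by blast
  thus ?thesis
    using spread_over_eq_elt_times[OF subfield_L S_in_spread] elt_times_subset_subspace_over[OF assms(1)]
    by blast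
qed

lemma Int_set_plus_elt_times:
  assumes "subspace_over K T" "S \<subseteq> T" "T \<subseteq> U" "card T = q ^ 3" "y \<in> T" "y \<notin> S"
  shows "U \<inter> (S + y *o L) = T"
proof -
  define W where "W = S + y *o L"
  have W: "subspace_over L W" "card W = q ^ 4"
    unfolding W_def using subspace_over_L_S_plus_line card_S_plus_line[OF assms(6)] .
  have "T = S + y *o K"
    using assms card_S card_K
    by (intro subspace_eq_set_plus_elt_times[OF subfield_K subspace_over_K_if_L[OF subspace_over_L_S]])
      (simp_all flip: power_Suc2)
  also have "\<dots> \<subseteq> W"
    unfolding W_def using K_subset_L by (intro set_plus_mono2 set_times_mono) auto
  finally have "T \<subseteq> U \<inter> W"
    using assms(3) by blast
  moreover have "U \<inter> W \<subseteq> T"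
  proof
    fix z assume "z \<in> U \<inter> W"
    show "z \<in> T"
    proof (rule ccontr)
      assume "z \<notin> T"
      have UW: "subspace_over K (U \<inter> W)"
        by (rule subspace_over_Int[OF subspace_U subspace_over_K_if_L[OF W(1)]])
      have "card (T + z *o K) = q ^ 4"
        using card_set_plus_elt_times[OF subfield_K assms(1) \<open>z \<notin> T\<close>] assms(4) card_K
        by (simp flip: power_Suc2)
      moreover have "T + z *o K \<subseteq> U \<inter> W"
        by (rule set_plus_elt_times_subset[OF UW \<open>T \<subseteq> U \<inter> W\<close> \<open>z \<in> U \<inter> W\<close>])
      ultimately have "card U \<le> card (U \<inter> W)"
        using card_U card_mono[of "U \<inter> W" "T + z *o K"] by simp
      moreover have "card (U \<inter> W) \<le> card U"
        by (rule card_mono) auto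
      ultimately have "U \<inter> W = U"
        by (intro card_subset_eq) auto
      hence "U \<subseteq> W"
        by blast
      hence "U = W"
        using card_U W(2) by (intro card_subset_eq) auto
      thus False
        using spread_in_U card_spread_over_in_L_subspace[OF W] q_ge_2 by simp
    qed
  qed
  ultimately show ?thesis
    unfolding W_def by blast
qed

theorem card_neighbours_with_full_spread:
  "card {W. (subspace_over K W \<and> card W = q ^ 4) \<and> (subspace_over K (U \<inter> W) \<and> card (U \<inter> W) = q ^ 3)
      \<and> card {S' \<in> spread_over L. S' \<subseteq> W} = q\<^sup>2 + 1} = q + 1"
  (is "card ?G = _")
proof -
  define H where "H = {T. subspace_over K T \<and> S \<subseteq> T \<and> T \<subseteq> U \<and> card T = q ^ 3}"
  have card_H: "card H = q + 1"
    using card_intermediate_subspaces[OF subfield_K card_K subspace_over_K_if_L[OF subspace_over_L_S],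
        of 2 U] card_S subspace_U card_U S_subset_U
    by (simp add: H_def)
  have L_subspace: "subspace_over L W" if "W \<in> ?G" for W
    using that q_ge_2 by (intro subspace_over_L_if_two_spread_elements) auto
  have Int_mem_H: "U \<inter> W \<in> H" if "W \<in> ?G" for W
    using that spread_element_subset_neighbour[OF L_subspace[OF that]] S_subset_U by (auto simp: H_def)
  have outside_S: "\<exists>y. y \<in> T \<and> y \<notin> S" if "T \<in> H" for T
  proof (rule ccontr)
    assume "\<not> (\<exists>y. y \<in> T \<and> y \<notin> S)"
    hence "card T \<le> card S"
      by (intro card_mono) auto
    thus False
      using that card_S q_ge_2 power_strict_increasing[of 2 3 q] by (simp add: H_def)
  qed
  have neighbour_eq: "W = S + y *o L" if "W \<in> ?G" "y \<in> U \<inter> W" "y \<notin> S" for W y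
    using that Int_mem_H[OF that(1)] card_S card_L
    by (intro subspace_eq_set_plus_elt_times[OF subfield_L subspace_over_L_S L_subspace])
      (auto simp: H_def simp flip: power_add)
  have "bij_betw (\<lambda>W. U \<inter> W) ?G H"
  proof (rule bij_betw_imageI)
    show "inj_on (\<lambda>W. U \<inter> W) ?G"
    proof (rule inj_onI)
      fix W1 W2 assume W: "W1 \<in> ?G" "W2 \<in> ?G" "U \<inter> W1 = U \<inter> W2"
      obtain y where "y \<in> U \<inter> W1" "y \<notin> S"
        using outside_S[OF Int_mem_H[OF W(1)]] by blast
      thus "W1 = W2"
        using neighbour_eq[OF W(1)] neighbour_eq[OF W(2)] W(3) by metis
    qed
  next
    show "(\<lambda>W. U \<inter> W) ` ?G = H"
    proof (intro equalityI subsetI)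
      fix T assume "T \<in> H"
      then obtain y where y: "y \<in> T" "y \<notin> S"
        using outside_S by blast
      define W where "W = S + y *o L"
      have "subspace_over L W" "card W = q ^ 4"
        unfolding W_def using subspace_over_L_S_plus_line card_S_plus_line[OF y(2)] .
      moreover have "U \<inter> W = T"
        using Int_set_plus_elt_times \<open>T \<in> H\<close> y by (simp add: H_def W_def)
      ultimately have "W \<in> ?G"
        using \<open>T \<in> H\<close> card_spread_over_in_L_subspace subspace_over_K_if_L by (simp add: H_def)
      thus "T \<in> (\<lambda>W. U \<inter> W) ` ?G"
        using \<open>U \<inter> W = T\<close> by blast
    qed (use Int_mem_H in blast)
  qed
  thus ?thesis
    using card_H by (simp add: bij_betw_same_card)
qed

end

section \<open>The Desarguesian 2-spread of F_{q^n}\<close>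

lemma subfield_card_fixed_points_power:
  assumes "card (UNIV :: 'a::{finite,field} set) = Q ^ m" "Q = p ^ j" "prime p" "j > 0" "m > 0"
  shows "subfield {x::'a. x ^ Q = x}" "card {x::'a. x ^ Q = x} = Q"
proof -
  have "CHAR('a) = p"
    using assms by (intro CHAR_eq_if_card_UNIV[of p "j * m"]) (simp_all add: power_mult)
  thus "subfield {x::'a. x ^ Q = x}" "card {x::'a. x ^ Q = x} = Q"
    using subfield_Frobenius_fixed_points[where 'a = 'a, of j] card_fixed_points_power_CHAR[OF assms(1)] assms(2-5)
    by simp_all
qed

lemma fq_subspace_dim_iff:
  assumes "subfield (Fq q :: 'a::{finite,field} set)" "card (Fq q :: 'a set) = q"
  shows "fq_subspace_dim q V d \<longleftrightarrow> subspace_over (Fq q) V \<and> card (V :: 'a set) = q ^ d"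
proof -
  have "fq_indep q = indep_over (Fq q :: 'a set)" "fq_span q = span_over (Fq q :: 'a set)"
    by (intro ext, simp add: fq_indep_def indep_over_def fq_span_def span_over_def)+
  thus ?thesis
    using basis_over_iff_card[OF assms(1)] assms(2) by (simp add: fq_subspace_dim_def)
qed

lemma desarg_spread_eq_spread_over: "desarg_spread q = spread_over (Fq2 q)"
  by (auto simp: desarg_spread_def spread_over_def elt_set_times_def mult.commute)

lemma Fq_subset_Fq2: "Fq q \<subseteq> Fq2 q"
  by (auto simp: Fq_def Fq2_def power2_eq_square power_mult)

theorem lemma6p2:
  fixes q n :: nat and U :: "'a::{finite,field} set"
  assumes "\<exists>p k. prime p \<and> k > 0 \<and> q = p ^ k"
    and "n \<ge> 6" and "even n"
    and "card (UNIV :: 'a set) = q ^ n"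
    and "fq_subspace_dim q U 4"
    and "spread_count q U = 1"
  shows "card {W. grassmann_adj q 4 U W \<and> spread_count q W = q\<^sup>2 + 1} = q + 1"
proof -
  obtain p k where p: "prime p" "k > 0" "q = p ^ k"
    using assms(1) by blast
  have "n = 2 * (n div 2)"
    using assms(3) by simp
  hence "card (UNIV :: 'a set) = (q\<^sup>2) ^ (n div 2)" "q\<^sup>2 = p ^ (2 * k)"
    using assms(4) p(3) by (metis power_mult, simp add: power_mult[symmetric] mult.commute)
  hence "subfield (Fq2 q :: 'a set)" "card (Fq2 q :: 'a set) = q\<^sup>2"
    using subfield_card_fixed_points_power[of "q\<^sup>2" "n div 2" p "2 * k"] p assms(2)
    by (simp_all add: Fq2_def)
  moreover have "subfield (Fq q :: 'a set)" "card (Fq q :: 'a set) = q"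
    using subfield_card_fixed_points_power[OF assms(4) p(3,1,2)] assms(2) by (simp_all add: Fq_def)
  ultimately interpret quadratic_subfield "Fq q :: 'a set" "Fq2 q" q
    using Fq_subset_Fq2 by unfold_locales
  note dim = fq_subspace_dim_iff[OF subfield_K card_K]
  have count: "spread_count q W = card {S \<in> spread_over (Fq2 q). S \<subseteq> W}" for W :: "'a set"
    by (simp add: spread_count_def desarg_spread_eq_spread_over)
  obtain S where "{S' \<in> spread_over (Fq2 q). S' \<subseteq> U} = {S}"
    using assms(6)[unfolded count] by (rule card_1_singletonE)
  then interpret unique_spread_element "Fq q :: 'a set" "Fq2 q" q U S
    using assms(5) by unfold_locales (simp_all add: dim)
  show ?thesis
    using card_neighbours_with_full_spread assms(5)
    by (simp add: grassmann_adj_def dim count conj_assoc)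
qed

end
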